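(* Let $A\in\{V,W,Q\}$ denote one of the three rank-based correlation classes described in the context, and let $S_{A,q}$ be the corresponding centered finite-$L_q$ power-sum statistic. Under $H_0$, for any fixed even integer $q\ge2$, \[ \mathbb E_0(S_{A,q})=0,\qquad \operatorname{var}_0(S_{A,q})=N_p\,v_{A,q,n}. \] Moreover, for fixed even integers $q_1,q_2\ge 2$, \[ \operatorname{cov}_0(S_{A,q_1},S_{A,q_2})=N_p\Big\{\mathbb E_0\big(\widetilde A_{12}^{\,q_1+q_2}\big)-\mathbb E_0\big(\widetilde A_{12}^{\,q_1}\big)\,\mathbb E_0\big(\widetilde A_{12}^{\,q_2}\big)\Big\}. \]
   Context: Let $\bm X=(X_1,\dots,X_p)^\top$ be a random vector with continuous marginal distributions and let $\bm X_i=(X_{i1},\dots,X_{ip})^\top$, $i=1,\dots,n$, be i.i.d. copies of $\bm X$. The null hypothesis is $H_0$: $X_1,\dots,X_p$ are mutually independent; $\mathbb E_0,\operatorname{var}_0,\operatorname{cov}_0,\mathbb P_0$ denote quantities computed under $H_0$. Let $\Lambda_p=\{(s,t):1\le s<t\le p\}$ and $N_p=|\Lambda_p|=\binom p2$. For $(s,t)\in\Lambda_p$ write $\bm X_i^{(st)}=(X_{is},X_{it})^\top$. Class $V$ (simple linear rank statistics): let $R^s_{ni}$ be the rank of $X_{is}$ among $X_{1s},\dots,X_{ns}$; for score functions $f,g:(0,1)\to\mathbb R$, $V_{st}=\frac1n\sum_{i=1}^n f\big(R^s_{ni}/(n+1)\big)g\big(R^t_{ni}/(n+1)\big)$. Rank-based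 U-statistics: let $m\ge2$ be fixed and $h:(\mathbb R^2)^m\to\mathbb R$ be a bounded kernel, symmetric in its $m$ arguments, and rank-based (it depends on its $m$ points in $\mathbb R^2$ only through their coordinate-wise ranks among these $m$ points). Put $U_{h,st}=\binom nm^{-1}\sum_{1\le i_1<\dots<i_m\le n}h(\bm X_{i_1}^{(st)},\dots,\bm X_{i_m}^{(st)})$. For $1\le r\le m$ let $h_r(z_1,\dots,z_r)=\mathbb E_0\{h(z_1,\dots,z_r,\bm Z_{r+1},\dots,\bm Z_m)\}$, where $\bm Z_j$ are i.i.d. copies of $(X_s,X_t)^\top$ under $H_0$. The kernel has degeneracy order $d$ if $h_1=\dots=h_{d-1}=0$ and $h_d\not\equiv0$. Class $W$: $d=1$ and $W_{h,st}=U_{h,st}$. Class $Q$: $d=2$ and $Q_{h,st}=U_{h,st}$. For a generic $A_{st}\in\{V_{st},W_{h,st},Q_{h,st}\}$ set $\widetilde A_{st}=A_{st}-\mathbb E_0(A_{st})$ and, for even $q\ge 2$, $\mu_{A,q,n}=\mathbb E_0(\widetilde A_{12}^{\,q})$, $v_{A,q,n}=\operatorname{var}_0(\widetilde A_{12}^{\,q})$, and \[ S_{A,q}=\sum_{(s,t)\in\Lambda_p}\{\widetilde A_{st}^{\,q}-\mu_{A,q,n}\}. \] *)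

theory Defs
  imports "HOL-Probability.Probability"
begin

text \<open>Data: X i s w is the s-th coordinate of the i-th observation (0-indexed,
  i < n, s < p).\<close>

definition pairs :: "nat \<Rightarrow> (nat \<times> nat) set" where
  "pairs p = {(s, t). s < t \<and> t < p}"

definition rank_of :: "(nat \<Rightarrow> nat \<Rightarrow> 'a \<Rightarrow> real) \<Rightarrow> nat \<Rightarrow> nat \<Rightarrow> nat \<Rightarrow> 'a \<Rightarrow> nat" where
  "rank_of X n i s w = card {j \<in> {..<n}. X j s w \<le> X i s w}"

definition V_stat :: "(real \<Rightarrow> real) \<Rightarrow> (real \<Rightarrow> real) \<Rightarrow> (nat \<Rightarrow> nat \<Rightarrow> 'a \<Rightarrow> real)
    \<Rightarrow> nat \<Rightarrow> nat \<Rightarrow> nat \<Rightarrow> 'a \<Rightarrow> real" where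
  "V_stat f g X n s t w =
     (\<Sum>i<n. f (real (rank_of X n i s w) / real (n + 1)) * g (real (rank_of X n i t w) / real (n + 1)))
       / real n"

definition U_stat :: "((real \<times> real) list \<Rightarrow> real) \<Rightarrow> nat \<Rightarrow> (nat \<Rightarrow> nat \<Rightarrow> 'a \<Rightarrow> real)
    \<Rightarrow> nat \<Rightarrow> nat \<Rightarrow> nat \<Rightarrow> 'a \<Rightarrow> real" where
  "U_stat h m X n s t w =
     (\<Sum>I \<in> {I. I \<subseteq> {..<n} \<and> card I = m}.
        h (map (\<lambda>i. (X i s w, X i t w)) (sorted_list_of_set I))) / real (n choose m)"

definition symmetric_kernel :: "nat \<Rightarrow> ((real \<times> real) list \<Rightarrow> real) \<Rightarrow> bool" where
  "symmetric_kernel m h \<longleftrightarrow>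
     (\<forall>xs ys. length xs = m \<longrightarrow> mset xs = mset ys \<longrightarrow> h xs = h ys)"

text \<open>h depends on its m points only through their coordinate-wise ranks, i.e.
  through the pattern of coordinate-wise comparisons.\<close>
definition rank_based_kernel :: "nat \<Rightarrow> ((real \<times> real) list \<Rightarrow> real) \<Rightarrow> bool" where
  "rank_based_kernel m h \<longleftrightarrow>
     (\<forall>xs ys. length xs = m \<longrightarrow> length ys = m \<longrightarrow>
        (\<forall>j<m. \<forall>k<m. (fst (xs ! j) \<le> fst (xs ! k) \<longleftrightarrow> fst (ys ! j) \<le> fst (ys ! k))
                   \<and> (snd (xs ! j) \<le> snd (xs ! k) \<longleftrightarrow> snd (ys ! j) \<le> snd (ys ! k)))
        \<longrightarrow> h xs = h ys)"

definition bounded_kernel :: "nat \<Rightarrow> ((real \<times> real) list \<Rightarrow> real) \<Rightarrow> bool" where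
  "bounded_kernel m h \<longleftrightarrow> (\<exists>B. \<forall>xs. length xs = m \<longrightarrow> \<bar>h xs\<bar> \<le> B)"

definition proj_kernel :: "nat \<Rightarrow> ((real \<times> real) list \<Rightarrow> real) \<Rightarrow> (real \<times> real) measure
    \<Rightarrow> nat \<Rightarrow> (real \<times> real) list \<Rightarrow> real" where
  "proj_kernel m h mu r zs =
     (\<integral>w. h (zs @ map w [0..<m - r]) \<partial>(PiM {..<m - r} (\<lambda>_. mu)))"

definition degeneracy_order :: "nat \<Rightarrow> ((real \<times> real) list \<Rightarrow> real) \<Rightarrow> (real \<times> real) measure
    \<Rightarrow> nat \<Rightarrow> bool" where
  "degeneracy_order m h mu d \<longleftrightarrow>
     1 \<le> d \<and> d \<le> m \<and>
     (\<forall>r. 1 \<le> r \<and> r < d \<longrightarrow> (\<forall>zs. length zs = r \<longrightarrow> proj_kernel m h mu r zs = 0)) \<and>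
     (\<exists>zs. length zs = d \<and> proj_kernel m h mu d zs \<noteq> 0)"

text \<open>Admissible kernel of degeneracy order d; the H0 law of (X_s, X_t) is the
  product of the marginal laws.\<close>
definition kernel_class :: "'a measure \<Rightarrow> (nat \<Rightarrow> nat \<Rightarrow> 'a \<Rightarrow> real) \<Rightarrow> nat \<Rightarrow> nat
    \<Rightarrow> ((real \<times> real) list \<Rightarrow> real) \<Rightarrow> nat \<Rightarrow> bool" where
  "kernel_class M X p m h d \<longleftrightarrow>
     2 \<le> m \<and> symmetric_kernel m h \<and> rank_based_kernel m h \<and> bounded_kernel m h \<and>
     (\<forall>(s, t) \<in> pairs p.
        degeneracy_order m h (distr M borel (X 0 s) \<Otimes>\<^sub>M distr M borel (X 0 t)) d)"

definition centered :: "'a measure \<Rightarrow> (nat \<Rightarrow> nat \<Rightarrow> 'a \<Rightarrow> real) \<Rightarrow> nat \<Rightarrow> nat \<Rightarrow> 'a \<Rightarrow> real" where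
  "centered M A s t w = A s t w - (\<integral>v. A s t v \<partial>M)"

definition mu_q :: "'a measure \<Rightarrow> (nat \<Rightarrow> nat \<Rightarrow> 'a \<Rightarrow> real) \<Rightarrow> nat \<Rightarrow> real" where
  "mu_q M A q = (\<integral>w. (centered M A 0 1 w) ^ q \<partial>M)"

definition v_q :: "'a measure \<Rightarrow> (nat \<Rightarrow> nat \<Rightarrow> 'a \<Rightarrow> real) \<Rightarrow> nat \<Rightarrow> real" where
  "v_q M A q = (\<integral>w. ((centered M A 0 1 w) ^ q - mu_q M A q)\<^sup>2 \<partial>M)"

definition S_stat :: "'a measure \<Rightarrow> (nat \<Rightarrow> nat \<Rightarrow> 'a \<Rightarrow> real) \<Rightarrow> nat \<Rightarrow> nat \<Rightarrow> 'a \<Rightarrow> real" where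
  "S_stat M A p q w = (\<Sum>(s, t) \<in> pairs p. (centered M A s t w) ^ q - mu_q M A q)"

end

theory Submission
  imports Defs "HOL-Combinatorics.Permutations"
begin

text \<open>Under \<open>H\<^sub>0\<close> the sample of each column is i.i.d. with an atomless law, hence exchangeable and
  almost surely tie-free, so its rank vector \<open>R\<^sub>s\<close> is uniformly distributed over the permutations
  of \<open>{1..n}\<close>; the rank vectors of different columns are independent. Each statistic is
  \<open>A\<^sub>s\<^sub>t = G(R\<^sub>s, R\<^sub>t)\<close> for a \<open>G\<close> that is invariant under relabelling the observations in both
  arguments simultaneously. Hence, given \<open>R\<^sub>s = a\<close>, the law of \<open>G(a, R\<^sub>t)\<close> does not depend on \<open>a\<close>,
  so \<open>A\<^sub>s\<^sub>t\<close> and \<open>A\<^sub>s\<^sub>u\<close> are independent although they share the column \<open>s\<close>, and statistics of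
  disjoint pairs are independent anyway. The centred summands of the power-sum statistic are therefore
  identically distributed and pairwise uncorrelated, and every moment identity is \<open>N\<^sub>p\<close> times the
  corresponding one for a single summand.\<close>

section \<open>Rank vectors\<close>

definition rank_vec :: "nat \<Rightarrow> (nat \<Rightarrow> real) \<Rightarrow> nat \<Rightarrow> nat" where
  "rank_vec n x = (\<lambda>i\<in>{..<n}. card {j \<in> {..<n}. x j \<le> x i})"

text \<open>Rank vectors may contain ties, so they range over \<open>rank_space\<close>; only the tie-free ones, in
  \<open>rank_perms\<close>, carry probability under \<open>H\<^sub>0\<close>.\<close>

definition rank_space :: "nat \<Rightarrow> (nat \<Rightarrow> nat) set" where
  "rank_space n = {..<n} \<rightarrow>\<^sub>E {1..n}"

definition rank_perms :: "nat \<Rightarrow> (nat \<Rightarrow> nat) set" where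
  "rank_perms n = {a \<in> rank_space n. bij_betw a {..<n} {1..n}}"

definition unif_rank :: "nat \<Rightarrow> (nat \<Rightarrow> nat) \<Rightarrow> real" where
  "unif_rank n a = (if a \<in> rank_perms n then 1 / real (card (rank_perms n)) else 0)"

lemma finite_rank_space: "finite (rank_space n)"
  unfolding rank_space_def by (simp add: finite_PiE)

lemma rank_perms_subset: "rank_perms n \<subseteq> rank_space n"
  unfolding rank_perms_def by auto

lemma finite_rank_perms: "finite (rank_perms n)"
  using finite_subset[OF rank_perms_subset finite_rank_space] .

lemma rank_vec_in_rank_space: "rank_vec n x \<in> rank_space n"
proof -
  have "card {j \<in> {..<n}. x j \<le> x i} \<in> {1..n}" if "i < n" for i
  proof -
    have "{j \<in> {..<n}. x j \<le> x i} \<noteq> {}" using that by blast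
    then have "card {j \<in> {..<n}. x j \<le> x i} \<noteq> 0" by simp
    moreover have "card {j \<in> {..<n}. x j \<le> x i} \<le> card {..<n}" by (intro card_mono) auto
    ultimately show ?thesis by (simp only: atLeastAtMost_iff card_lessThan) arith
  qed
  then show ?thesis unfolding rank_vec_def rank_space_def by auto
qed

lemma rank_vec_le_iff:
  assumes "i < n" "j < n"
  shows "rank_vec n x i \<le> rank_vec n x j \<longleftrightarrow> x i \<le> x j"
proof
  assume "x i \<le> x j"
  then have "{k \<in> {..<n}. x k \<le> x i} \<subseteq> {k \<in> {..<n}. x k \<le> x j}" by auto
  then show "rank_vec n x i \<le> rank_vec n x j" using assms unfolding rank_vec_def by (simp add: card_mono)
next
  assume "rank_vec n x i \<le> rank_vec n x j"
  show "x i \<le> x j"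
  proof (rule ccontr)
    assume "\<not> x i \<le> x j"
    then have "{k \<in> {..<n}. x k \<le> x j} \<subset> {k \<in> {..<n}. x k \<le> x i}" using assms by auto
    then have "card {k \<in> {..<n}. x k \<le> x j} < card {k \<in> {..<n}. x k \<le> x i}"
      by (intro psubset_card_mono) auto
    with \<open>rank_vec n x i \<le> rank_vec n x j\<close> show False using assms unfolding rank_vec_def by simp
  qed
qed

lemma rank_vec_in_rank_perms:
  assumes "inj_on x {..<n}"
  shows "rank_vec n x \<in> rank_perms n"
proof -
  have inj: "inj_on (rank_vec n x) {..<n}"
  proof (rule inj_onI)
    fix i j assume ij: "i \<in> {..<n}" "j \<in> {..<n}" "rank_vec n x i = rank_vec n x j"
    then have "x i = x j" using rank_vec_le_iff[of i n j x] rank_vec_le_iff[of j n i x] by auto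
    then show "i = j" using inj_onD[OF assms] ij(1,2) by blast
  qed
  have "rank_vec n x ` {..<n} \<subseteq> {1..n}"
    using rank_vec_in_rank_space[of n x] unfolding rank_space_def by auto
  moreover have "card (rank_vec n x ` {..<n}) = card {1..n}" using card_image[OF inj] by simp
  ultimately have "rank_vec n x ` {..<n} = {1..n}" by (intro card_subset_eq) auto
  then show ?thesis
    using inj rank_vec_in_rank_space unfolding rank_perms_def bij_betw_def by blast
qed

lemma rank_vec_cong:
  assumes "\<And>i. i < n \<Longrightarrow> x i = y i"
  shows "rank_vec n x = rank_vec n y"
proof -
  have "{j \<in> {..<n}. x j \<le> x i} = {j \<in> {..<n}. y j \<le> y i}" if "i < n" for i
    using assms that by auto
  then show ?thesis unfolding rank_vec_def by (intro restrict_ext) simp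
qed

lemma rank_vec_comp_perm:
  assumes \<tau>: "\<tau> permutes {..<n}"
  shows "rank_vec n (x \<circ> \<tau>) = rank_vec n x \<circ> \<tau>"
proof
  fix i
  show "rank_vec n (x \<circ> \<tau>) i = (rank_vec n x \<circ> \<tau>) i"
  proof (cases "i < n")
    case True
    have "{j \<in> {..<n}. x (\<tau> j) \<le> x (\<tau> i)} = \<tau> -` {k \<in> {..<n}. x k \<le> x (\<tau> i)}"
      using permutes_in_image[OF \<tau>] by auto
    moreover have "card (\<tau> -` {k \<in> {..<n}. x k \<le> x (\<tau> i)}) = card {k \<in> {..<n}. x k \<le> x (\<tau> i)}"
      using permutes_bij[OF \<tau>] by (intro card_vimage_inj) (auto simp: bij_def)
    ultimately show ?thesis
      using True permutes_in_image[OF \<tau>, of i] unfolding rank_vec_def by simp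
  next
    case False
    then show ?thesis using permutes_not_in[OF \<tau>, of i] unfolding rank_vec_def by simp
  qed
qed

lemma comp_perm_in_rank_space:
  assumes \<tau>: "\<tau> permutes {..<n}" and a: "a \<in> rank_space n"
  shows "a \<circ> \<tau> \<in> rank_space n"
  unfolding rank_space_def
proof (rule PiE_I)
  fix i assume "i \<in> {..<n}"
  then have "\<tau> i \<in> {..<n}" using permutes_in_image[OF \<tau>, of i] by blast
  then show "(a \<circ> \<tau>) i \<in> {1..n}"
    using PiE_mem[OF a[unfolded rank_space_def]] by simp
next
  fix i assume "i \<notin> {..<n}"
  then show "(a \<circ> \<tau>) i = undefined"
    using PiE_arb[OF a[unfolded rank_space_def]] permutes_not_in[OF \<tau>] by simp
qed

lemma comp_perm_in_rank_perms:
  assumes \<tau>: "\<tau> permutes {..<n}" and a: "a \<in> rank_perms n"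
  shows "a \<circ> \<tau> \<in> rank_perms n"
  using a comp_perm_in_rank_space[OF \<tau>] bij_betw_trans[OF permutes_imp_bij[OF \<tau>]]
  unfolding rank_perms_def by auto

lemma comp_perm_in_rank_perms_iff:
  assumes \<tau>: "\<tau> permutes {..<n}"
  shows "a \<circ> \<tau> \<in> rank_perms n \<longleftrightarrow> a \<in> rank_perms n"
  using comp_perm_in_rank_perms[OF permutes_inv[OF \<tau>], of "a \<circ> \<tau>"] comp_perm_in_rank_perms[OF \<tau>]
  by (auto simp: comp_assoc permutes_inv_o[OF \<tau>])

lemma rank_perms_transitive:
  assumes a: "a \<in> rank_perms n" and b: "b \<in> rank_perms n"
  obtains \<tau> where "\<tau> permutes {..<n}" "b = a \<circ> \<tau>"
proof
  define \<tau> where "\<tau> i = (if i < n then inv_into {..<n} a (b i) else i)" for i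
  have bij: "bij_betw a {..<n} {1..n}" "bij_betw b {..<n} {1..n}"
    using a b unfolding rank_perms_def by auto
  have "bij_betw (inv_into {..<n} a \<circ> b) {..<n} {..<n}"
    using bij_betw_trans[OF bij(2) bij_betw_inv_into[OF bij(1)]] .
  then have "bij_betw \<tau> {..<n} {..<n}"
    by (rule bij_betw_cong[THEN iffD1, rotated]) (auto simp: \<tau>_def)
  then show \<tau>: "\<tau> permutes {..<n}" by (rule bij_imp_permutes) (auto simp: \<tau>_def)
  show "b = a \<circ> \<tau>"
  proof
    fix i
    show "b i = (a \<circ> \<tau>) i"
    proof (cases "i < n")
      case True
      then have "b i \<in> {1..n}" using bij(2) by (auto dest: bij_betwE)
      then have "a (inv_into {..<n} a (b i)) = b i" by (rule bij_betw_inv_into_right[OF bij(1)])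
      then show ?thesis using True by (simp add: \<tau>_def)
    next
      case False
      have "a \<in> {..<n} \<rightarrow>\<^sub>E {1..n}" "b \<in> {..<n} \<rightarrow>\<^sub>E {1..n}"
        using a b unfolding rank_perms_def rank_space_def by auto
      then show ?thesis using False PiE_arb[of a] PiE_arb[of b] by (simp add: \<tau>_def)
    qed
  qed
qed

lemma rank_perms_nonempty: "rank_perms n \<noteq> {}"
proof -
  have "bij_betw Suc {..<n} {1..n}"
    by (rule bij_betw_byWitness[of _ "\<lambda>i. i - 1"]) auto
  then have "(\<lambda>i\<in>{..<n}. Suc i) \<in> rank_perms n"
    unfolding rank_perms_def rank_space_def by (auto simp: bij_betw_def inj_on_def)
  then show ?thesis by blast
qed

lemma unif_rank_comp_perm: "\<tau> permutes {..<n} \<Longrightarrow> unif_rank n (a \<circ> \<tau>) = unif_rank n a"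
  unfolding unif_rank_def by (simp add: comp_perm_in_rank_perms_iff)

lemma sum_unif_rank: "(\<Sum>a\<in>rank_space n. unif_rank n a) = 1"
proof -
  have "(\<Sum>a\<in>rank_space n. unif_rank n a) = (\<Sum>a\<in>rank_perms n. 1 / real (card (rank_perms n)))"
    unfolding unif_rank_def using rank_perms_subset finite_rank_space
    by (simp add: sum.If_cases Int_absorb1)
  then show ?thesis using rank_perms_nonempty finite_rank_perms by simp
qed

lemma sum_rank_space_comp_perm:
  assumes \<tau>: "\<tau> permutes {..<n}"
  shows "(\<Sum>a\<in>rank_space n. F (a \<circ> \<tau>)) = (\<Sum>a\<in>rank_space n. F a)"
proof (rule sum.reindex_bij_witness[of _ "\<lambda>a. a \<circ> inv \<tau>" "\<lambda>a. a \<circ> \<tau>"])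
  fix a assume a: "a \<in> rank_space n"
  show "a \<circ> inv \<tau> \<circ> \<tau> = a" "a \<circ> \<tau> \<circ> inv \<tau> = a"
    by (simp_all add: comp_assoc permutes_inv_o[OF \<tau>])
  show "a \<circ> inv \<tau> \<in> rank_space n" "a \<circ> \<tau> \<in> rank_space n"
    using a by (simp_all add: comp_perm_in_rank_space \<tau> permutes_inv)
qed simp

lemma rank_vec_eq_iff:
  assumes "a \<in> rank_space n"
  shows "rank_vec n x = a \<longleftrightarrow> (\<forall>i<n. card {j \<in> {..<n}. x j \<le> x i} = a i)"
proof -
  have "a \<in> extensional {..<n}" using assms unfolding rank_space_def PiE_iff by blast
  then show ?thesis unfolding rank_vec_def by (auto simp: fun_eq_iff extensional_def)
qed

section \<open>Statistics of two rank vectors invariant under relabelling the observations\<close>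

definition perm_invariant :: "nat \<Rightarrow> ((nat \<Rightarrow> nat) \<Rightarrow> (nat \<Rightarrow> nat) \<Rightarrow> real) \<Rightarrow> bool" where
  "perm_invariant n G \<longleftrightarrow> (\<forall>\<tau> a b. \<tau> permutes {..<n} \<longrightarrow> G (a \<circ> \<tau>) (b \<circ> \<tau>) = G a b)"

definition rank_expectation ::
    "nat \<Rightarrow> ((nat \<Rightarrow> nat) \<Rightarrow> (nat \<Rightarrow> nat) \<Rightarrow> real) \<Rightarrow> (real \<Rightarrow> real) \<Rightarrow> real" where
  "rank_expectation n G \<phi> =
     (\<Sum>a\<in>rank_space n. \<Sum>b\<in>rank_space n. \<phi> (G a b) * unif_rank n a * unif_rank n b)"

lemma perm_invariant_swap: "perm_invariant n G \<Longrightarrow> perm_invariant n (\<lambda>a b. G b a)"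
  unfolding perm_invariant_def by auto

lemma rank_expectation_swap: "rank_expectation n (\<lambda>a b. G b a) \<phi> = rank_expectation n G \<phi>"
  unfolding rank_expectation_def by (subst sum.swap) (simp only: mult_ac)

lemma rank_expectation_diff:
  "rank_expectation n G (\<lambda>z. \<phi> z - \<psi> z) = rank_expectation n G \<phi> - rank_expectation n G \<psi>"
  unfolding rank_expectation_def by (simp add: sum_subtractf left_diff_distrib)

lemma rank_expectation_cmult: "rank_expectation n G (\<lambda>z. c * \<phi> z) = c * rank_expectation n G \<phi>"
  unfolding rank_expectation_def by (simp add: sum_distrib_left mult.assoc)

lemma rank_expectation_const: "rank_expectation n G (\<lambda>z. c) = c"
proof -
  have "rank_expectation n G (\<lambda>z. c)
      = (\<Sum>a\<in>rank_space n. c * unif_rank n a * (\<Sum>b\<in>rank_space n. unif_rank n b))"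
    unfolding rank_expectation_def by (simp add: sum_distrib_left)
  also have "\<dots> = c" by (simp add: sum_unif_rank sum_distrib_left[symmetric])
  finally show ?thesis .
qed

text \<open>Conditionally on a tie-free first rank vector the expectation is unchanged: this is where the
  invariance of \<open>G\<close> enters.\<close>

lemma rank_expectation_conditional:
  assumes G: "perm_invariant n G" and a: "a \<in> rank_perms n"
  shows "(\<Sum>b\<in>rank_space n. \<phi> (G a b) * unif_rank n b) = rank_expectation n G \<phi>"
proof -
  define K where "K a = (\<Sum>b\<in>rank_space n. \<phi> (G a b) * unif_rank n b)" for a
  have K_comp_perm: "K (a \<circ> \<tau>) = K a" if \<tau>: "\<tau> permutes {..<n}" for a \<tau>
  proof -
    have "K (a \<circ> \<tau>) = (\<Sum>b\<in>rank_space n. \<phi> (G (a \<circ> \<tau>) (b \<circ> \<tau>)) * unif_rank n (b \<circ> \<tau>))"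
      unfolding K_def by (rule sum_rank_space_comp_perm[OF \<tau>, symmetric])
    also have "\<dots> = K a"
      using G \<tau> unfolding perm_invariant_def K_def by (simp add: unif_rank_comp_perm)
    finally show ?thesis .
  qed
  have K_const: "K a' = K a" if a': "a' \<in> rank_perms n" for a'
  proof -
    obtain \<tau> where "\<tau> permutes {..<n}" "a' = a \<circ> \<tau>" by (rule rank_perms_transitive[OF a a'])
    then show ?thesis by (simp add: K_comp_perm)
  qed
  have "rank_expectation n G \<phi> = (\<Sum>a'\<in>rank_space n. unif_rank n a' * K a')"
    unfolding rank_expectation_def K_def by (simp add: sum_distrib_left mult_ac)
  also have "\<dots> = (\<Sum>a'\<in>rank_space n. unif_rank n a' * K a)"
    using K_const by (intro sum.cong) (auto simp: unif_rank_def)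
  also have "\<dots> = K a" by (simp add: sum_distrib_right[symmetric] sum_unif_rank)
  finally show ?thesis unfolding K_def by simp
qed

lemma rank_expectation_mult_shared:
  assumes "perm_invariant n G1" "perm_invariant n G2"
  shows "(\<Sum>a\<in>rank_space n. \<Sum>b\<in>rank_space n. \<Sum>c\<in>rank_space n.
            \<phi> (G1 a b) * \<psi> (G2 a c) * unif_rank n a * unif_rank n b * unif_rank n c)
       = rank_expectation n G1 \<phi> * rank_expectation n G2 \<psi>"
proof -
  have "(\<Sum>b\<in>rank_space n. \<Sum>c\<in>rank_space n.
            \<phi> (G1 a b) * \<psi> (G2 a c) * unif_rank n a * unif_rank n b * unif_rank n c)
      = unif_rank n a * (rank_expectation n G1 \<phi> * rank_expectation n G2 \<psi>)" for a
  proof (cases "a \<in> rank_perms n")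
    case True
    have "unif_rank n a * ((\<Sum>b\<in>rank_space n. \<phi> (G1 a b) * unif_rank n b)
                          * (\<Sum>c\<in>rank_space n. \<psi> (G2 a c) * unif_rank n c))
        = (\<Sum>b\<in>rank_space n. \<Sum>c\<in>rank_space n.
            \<phi> (G1 a b) * \<psi> (G2 a c) * unif_rank n a * unif_rank n b * unif_rank n c)"
      unfolding sum_product by (simp only: sum_distrib_left sum_distrib_right mult_ac)
    then show ?thesis
      using rank_expectation_conditional[OF assms(1) True] rank_expectation_conditional[OF assms(2) True]
      by simp
  qed (simp add: unif_rank_def)
  then show ?thesis by (simp add: sum_distrib_right[symmetric] sum_unif_rank)
qed

lemma rank_expectation_mult_disjoint:
  "(\<Sum>a\<in>rank_space n. \<Sum>b\<in>rank_space n. \<Sum>c\<in>rank_space n. \<Sum>d\<in>rank_space n.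
      \<phi> (G1 a b) * \<psi> (G2 c d) * unif_rank n a * unif_rank n b * unif_rank n c * unif_rank n d)
   = rank_expectation n G1 \<phi> * rank_expectation n G2 \<psi>"
proof -
  have "rank_expectation n G1 \<phi> * rank_expectation n G2 \<psi>
      = (\<Sum>a\<in>rank_space n. \<Sum>b\<in>rank_space n.
           \<phi> (G1 a b) * unif_rank n a * unif_rank n b * rank_expectation n G2 \<psi>)"
    unfolding rank_expectation_def[of n G1] by (simp add: sum_distrib_right)
  also have "\<dots> = (\<Sum>a\<in>rank_space n. \<Sum>b\<in>rank_space n. \<Sum>c\<in>rank_space n. \<Sum>d\<in>rank_space n.
      \<phi> (G1 a b) * \<psi> (G2 c d) * unif_rank n a * unif_rank n b * unif_rank n c * unif_rank n d)"
    unfolding rank_expectation_def[of n G2] by (simp add: sum_distrib_left mult_ac)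
  finally show ?thesis by simp
qed

lemma sum_lists_length_Suc:
  "(\<Sum>xs\<in>{xs. set xs \<subseteq> A \<and> length xs = Suc k}. f xs)
     = (\<Sum>x\<in>A. \<Sum>xs\<in>{xs. set xs \<subseteq> A \<and> length xs = k}. f (x # xs))"
proof -
  have "(\<Sum>xs\<in>{xs. set xs \<subseteq> A \<and> length xs = Suc k}. f xs)
      = (\<Sum>(xs, x)\<in>{xs. set xs \<subseteq> A \<and> length xs = k} \<times> A. f (x # xs))"
    unfolding lists_length_Suc_eq by (subst sum.reindex) (auto simp: inj_on_def intro!: sum.cong)
  also have "\<dots> = (\<Sum>x\<in>A. \<Sum>xs\<in>{xs. set xs \<subseteq> A \<and> length xs = k}. f (x # xs))"
    unfolding sum.cartesian_product[symmetric] by (rule sum.swap)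
  finally show ?thesis .
qed

lemma lists_length_0: "{xs. set xs \<subseteq> A \<and> length xs = 0} = {[]}"
  by auto

section \<open>The rank vector of an i.i.d. sample with atomless law\<close>

lemma measurable_rank_vec:
  assumes Y: "\<And>i. i < n \<Longrightarrow> Y i \<in> borel_measurable N"
  shows "(\<lambda>w. rank_vec n (\<lambda>i. Y i w)) \<in> measurable N (count_space (rank_space n))"
proof -
  define Y' where "Y' i = (if i < n then Y i else (\<lambda>_. 0))" for i
  have [measurable]: "Y' i \<in> borel_measurable N" for i using Y unfolding Y'_def by auto
  have "(\<lambda>w. rank_vec n (\<lambda>i. Y i w)) -` {a} \<inter> space N \<in> sets N" if a: "a \<in> rank_space n" for a
  proof -
    \<comment> \<open>A counting condition as a finite Boolean combination of comparisons, so that the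
      \<open>measurable\<close> method applies.\<close>
    have count_eq: "card {j \<in> {..<n}. P j} = k \<longleftrightarrow> (\<exists>K\<in>Pow {..<n}. card K = k \<and> (\<forall>j\<in>{..<n}. P j \<longleftrightarrow> j \<in> K))"
      for P k
    proof
      assume "\<exists>K\<in>Pow {..<n}. card K = k \<and> (\<forall>j\<in>{..<n}. P j \<longleftrightarrow> j \<in> K)"
      then obtain K where "K \<subseteq> {..<n}" "card K = k" "\<forall>j\<in>{..<n}. P j \<longleftrightarrow> j \<in> K" by blast
      moreover from this have "{j \<in> {..<n}. P j} = K" by auto
      ultimately show "card {j \<in> {..<n}. P j} = k" by simp
    qed blast
    have "rank_vec n (\<lambda>i. Y i w) = a \<longleftrightarrow>
        (\<forall>i\<in>{..<n}. \<exists>K\<in>Pow {..<n}. card K = a i \<and> (\<forall>j\<in>{..<n}. Y' j w \<le> Y' i w \<longleftrightarrow> j \<in> K))" for w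
      unfolding rank_vec_eq_iff[OF a] count_eq by (auto simp: Y'_def)
    then have "(\<lambda>w. rank_vec n (\<lambda>i. Y i w)) -` {a} \<inter> space N
        = {w \<in> space N. \<forall>i\<in>{..<n}. \<exists>K\<in>Pow {..<n}. card K = a i \<and> (\<forall>j\<in>{..<n}. Y' j w \<le> Y' i w \<longleftrightarrow> j \<in> K)}"
      by auto
    also have "\<dots> \<in> sets N" by measurable
    finally show ?thesis .
  qed
  then show ?thesis
    unfolding measurable_count_space_eq2[OF finite_rank_space] using rank_vec_in_rank_space by auto
qed

lemma sets_rank_vec_eq:
  assumes "\<And>i. i < n \<Longrightarrow> Y i \<in> borel_measurable N"
  shows "{w \<in> space N. rank_vec n (\<lambda>i. Y i w) = a} \<in> sets N"
proof (cases "a \<in> rank_space n")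
  case True
  have "(\<lambda>w. rank_vec n (\<lambda>i. Y i w)) -` {a} \<inter> space N \<in> sets N"
    by (rule measurable_sets[OF measurable_rank_vec[OF assms]]) (use True in auto)
  moreover have "(\<lambda>w. rank_vec n (\<lambda>i. Y i w)) -` {a} \<inter> space N = {w \<in> space N. rank_vec n (\<lambda>i. Y i w) = a}"
    by auto
  ultimately show ?thesis by simp
next
  case False
  then have "{w \<in> space N. rank_vec n (\<lambda>i. Y i w) = a} = {}" using rank_vec_in_rank_space by auto
  then show ?thesis by (metis sets.empty_sets)
qed

lemma (in prob_space) indep_sets_reindex:
  assumes indep: "indep_sets F (f ` I)" and inj: "inj_on f I"
  shows "indep_sets (\<lambda>i. F (f i)) I"
  unfolding indep_sets_def
proof (intro conjI ballI allI impI)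
  fix i assume "i \<in> I"
  then show "F (f i) \<subseteq> events" using indep unfolding indep_sets_def by auto
next
  fix J A assume J: "J \<subseteq> I" "J \<noteq> {}" "finite J" and A: "A \<in> Pi J (\<lambda>i. F (f i))"
  define A' where "A' k = A (the_inv_into I f k)" for k
  have A'f: "A' (f j) = A j" if "j \<in> J" for j
    unfolding A'_def using the_inv_into_f_f[OF inj] J that by auto
  have "prob (\<Inter>k\<in>f ` J. A' k) = (\<Prod>k\<in>f ` J. prob (A' k))"
    using J A A'f by (intro indep_setsD[OF indep]) auto
  moreover have "(\<Inter>k\<in>f ` J. A' k) = (\<Inter>j\<in>J. A j)" using A'f by auto
  moreover have "(\<Prod>k\<in>f ` J. prob (A' k)) = (\<Prod>j\<in>J. prob (A j))"
    using prod.reindex[of f J "\<lambda>k. prob (A' k)"] inj_on_subset[OF inj J(1)] A'f by simp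
  ultimately show "prob (\<Inter>j\<in>J. A j) = (\<Prod>j\<in>J. prob (A j))" by simp
qed

lemma (in prob_space) indep_vars_reindex:
  assumes indep: "indep_vars M' X (f ` I)" and inj: "inj_on f I"
  shows "indep_vars (\<lambda>i. M' (f i)) (\<lambda>i. X (f i)) I"
  using indep indep_sets_reindex[OF _ inj] unfolding indep_vars_def by auto

lemma (in prob_space) integral_finite_valued:
  fixes \<Phi> :: "'b \<Rightarrow> real"
  assumes V: "finite V" and R: "\<And>w. w \<in> space M \<Longrightarrow> R w \<in> V"
    and events: "\<And>v. v \<in> V \<Longrightarrow> {w \<in> space M. R w = v} \<in> events"
  shows "integrable M (\<lambda>w. \<Phi> (R w))"
    and "(\<integral>w. \<Phi> (R w) \<partial>M) = (\<Sum>v\<in>V. \<Phi> v * prob {w \<in> space M. R w = v})"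
proof -
  have simple: "\<Phi> (R w) = (\<Sum>v\<in>V. \<Phi> v * indicator {w \<in> space M. R w = v} w)" if "w \<in> space M" for w
    using R[OF that] V by (simp add: indicator_def that if_distrib sum.If_cases)
  have int: "integrable M (\<lambda>w. \<Phi> v * indicator {w \<in> space M. R w = v} w)" if "v \<in> V" for v
    using events[OF that] by (intro integrable_mult_right integrable_real_indicator) (auto simp: emeasure_eq_measure)
  have "integrable M (\<lambda>w. \<Sum>v\<in>V. \<Phi> v * indicator {w \<in> space M. R w = v} w)"
    by (intro Bochner_Integration.integrable_sum int)
  moreover have "integrable M (\<lambda>w. \<Phi> (R w))
      \<longleftrightarrow> integrable M (\<lambda>w. \<Sum>v\<in>V. \<Phi> v * indicator {w \<in> space M. R w = v} w)"
    by (rule Bochner_Integration.integrable_cong) (simp_all add: simple)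
  ultimately show "integrable M (\<lambda>w. \<Phi> (R w))" by simp
  have "(\<integral>w. \<Phi> (R w) \<partial>M) = (\<integral>w. (\<Sum>v\<in>V. \<Phi> v * indicator {w \<in> space M. R w = v} w) \<partial>M)"
    by (rule Bochner_Integration.integral_cong) (simp_all add: simple)
  also have "\<dots> = (\<Sum>v\<in>V. \<Phi> v * prob {w \<in> space M. R w = v})"
    using events int by (simp add: Bochner_Integration.integral_sum)
  finally show "(\<integral>w. \<Phi> (R w) \<partial>M) = (\<Sum>v\<in>V. \<Phi> v * prob {w \<in> space M. R w = v})" .
qed

lemma emeasure_diagonal_eq_0:
  fixes \<nu> :: "'b measure"
  assumes "sigma_finite_measure \<nu>" and atomless: "\<And>x. emeasure \<nu> {x} = 0"
    and diag: "{z \<in> space (\<nu> \<Otimes>\<^sub>M \<nu>). fst z = snd z} \<in> sets (\<nu> \<Otimes>\<^sub>M \<nu>)"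
  shows "emeasure (\<nu> \<Otimes>\<^sub>M \<nu>) {z \<in> space (\<nu> \<Otimes>\<^sub>M \<nu>). fst z = snd z} = 0"
proof -
  interpret \<nu>: sigma_finite_measure \<nu> by fact
  have "emeasure (\<nu> \<Otimes>\<^sub>M \<nu>) {z \<in> space (\<nu> \<Otimes>\<^sub>M \<nu>). fst z = snd z}
      = (\<integral>\<^sup>+x. emeasure \<nu> (Pair x -` {z \<in> space (\<nu> \<Otimes>\<^sub>M \<nu>). fst z = snd z}) \<partial>\<nu>)"
    by (rule \<nu>.emeasure_pair_measure_alt[OF diag])
  also have "\<dots> = (\<integral>\<^sup>+x. 0 \<partial>\<nu>)"
  proof (rule nn_integral_cong)
    fix x assume "x \<in> space \<nu>"
    then have "Pair x -` {z \<in> space (\<nu> \<Otimes>\<^sub>M \<nu>). fst z = snd z} = {x}"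
      by (auto simp: space_pair_measure)
    then show "emeasure \<nu> (Pair x -` {z \<in> space (\<nu> \<Otimes>\<^sub>M \<nu>). fst z = snd z}) = 0"
      using atomless by simp
  qed
  finally show ?thesis by simp
qed

lemma distr_PiM_coordinate_pair:
  assumes "prob_space \<nu>" and ij: "i \<in> I" "j \<in> I" "i \<noteq> j"
  shows "distr (PiM I (\<lambda>_. \<nu>)) (\<nu> \<Otimes>\<^sub>M \<nu>) (\<lambda>\<omega>. (\<omega> i, \<omega> j)) = \<nu> \<Otimes>\<^sub>M \<nu>"
proof -
  interpret \<nu>: prob_space \<nu> by fact
  define f where "f b = (if b then i else j)" for b :: bool
  define B where "B = PiM (UNIV :: bool set) (\<lambda>_. \<nu>)"
  have f: "inj_on f UNIV" "f \<in> UNIV \<rightarrow> I" using ij unfolding f_def inj_on_def by auto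
  have restrict_f: "(\<lambda>\<omega>. \<lambda>b\<in>UNIV. \<omega> (f b)) \<in> measurable (PiM I (\<lambda>_. \<nu>)) B"
    unfolding B_def by (rule measurable_restrict) (use f in \<open>auto intro!: measurable_component_singleton\<close>)
  have pair: "(\<lambda>x. (x True, x False)) \<in> measurable B (\<nu> \<Otimes>\<^sub>M \<nu>)"
    unfolding B_def by (intro measurable_Pair measurable_component_singleton) auto
  have "distr (PiM I (\<lambda>_. \<nu>)) (\<nu> \<Otimes>\<^sub>M \<nu>) (\<lambda>\<omega>. (\<omega> i, \<omega> j))
      = distr (PiM I (\<lambda>_. \<nu>)) (\<nu> \<Otimes>\<^sub>M \<nu>) ((\<lambda>x. (x True, x False)) \<circ> (\<lambda>\<omega>. \<lambda>b\<in>UNIV. \<omega> (f b)))"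
    by (rule distr_cong) (auto simp: f_def)
  also have "\<dots> = distr (distr (PiM I (\<lambda>_. \<nu>)) B (\<lambda>\<omega>. \<lambda>b\<in>UNIV. \<omega> (f b))) (\<nu> \<Otimes>\<^sub>M \<nu>) (\<lambda>x. (x True, x False))"
    by (rule distr_distr[symmetric, OF pair restrict_f])
  also have "distr (PiM I (\<lambda>_. \<nu>)) B (\<lambda>\<omega>. \<lambda>b\<in>UNIV. \<omega> (f b)) = B"
    unfolding B_def using distr_PiM_reindex[of I "\<lambda>_. \<nu>" f UNIV] f \<nu>.prob_space_axioms by simp
  also have "distr B (\<nu> \<Otimes>\<^sub>M \<nu>) (\<lambda>x. (x True, x False)) = \<nu> \<Otimes>\<^sub>M \<nu>"
  proof -
    have "case_bool \<nu> \<nu> = (\<lambda>_. \<nu>)" by (rule ext) (simp split: bool.split)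
    then show ?thesis
      using pair_measure_eq_distr_PiM[of \<nu> \<nu>] \<nu>.sigma_finite_measure_axioms unfolding B_def by simp
  qed
  finally show ?thesis .
qed

lemma AE_PiM_inj_on:
  fixes \<nu> :: "real measure"
  assumes "prob_space \<nu>" and sets_\<nu>: "sets \<nu> = sets borel" and atomless: "\<And>x. emeasure \<nu> {x} = 0"
    and "finite I"
  shows "AE \<omega> in PiM I (\<lambda>_. \<nu>). inj_on \<omega> I"
proof -
  interpret \<nu>: prob_space \<nu> by fact
  have diag: "{z \<in> space (\<nu> \<Otimes>\<^sub>M \<nu>). fst z = snd z} \<in> sets (\<nu> \<Otimes>\<^sub>M \<nu>)"
  proof -
    have "{z \<in> space (borel \<Otimes>\<^sub>M borel). fst z = (snd z :: real)} \<in> sets (borel \<Otimes>\<^sub>M borel)"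
      by measurable
    moreover have sets_eq: "sets (\<nu> \<Otimes>\<^sub>M \<nu>) = sets (borel \<Otimes>\<^sub>M borel)"
      by (rule sets_pair_measure_cong) (use sets_\<nu> in auto)
    moreover have "space (\<nu> \<Otimes>\<^sub>M \<nu>) = space (borel \<Otimes>\<^sub>M borel)"
      using sets_eq by (rule sets_eq_imp_space_eq)
    ultimately show ?thesis by simp
  qed
  have "AE \<omega> in PiM I (\<lambda>_. \<nu>). \<omega> i \<noteq> \<omega> j" if ij: "i \<in> I" "j \<in> I" "i \<noteq> j" for i j
  proof (rule AE_I')
    define D where "D = {z \<in> space (\<nu> \<Otimes>\<^sub>M \<nu>). fst z = snd z}"
    have pair: "(\<lambda>\<omega>. (\<omega> i, \<omega> j)) \<in> measurable (PiM I (\<lambda>_. \<nu>)) (\<nu> \<Otimes>\<^sub>M \<nu>)"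
      using ij by (intro measurable_Pair measurable_component_singleton) auto
    have "{\<omega> \<in> space (PiM I (\<lambda>_. \<nu>)). \<omega> i = \<omega> j} = (\<lambda>\<omega>. (\<omega> i, \<omega> j)) -` D \<inter> space (PiM I (\<lambda>_. \<nu>))"
      using measurable_space[OF pair] unfolding D_def by auto
    moreover have "(\<lambda>\<omega>. (\<omega> i, \<omega> j)) -` D \<inter> space (PiM I (\<lambda>_. \<nu>)) \<in> sets (PiM I (\<lambda>_. \<nu>))"
      using measurable_sets[OF pair diag] unfolding D_def .
    moreover have "emeasure (PiM I (\<lambda>_. \<nu>)) ((\<lambda>\<omega>. (\<omega> i, \<omega> j)) -` D \<inter> space (PiM I (\<lambda>_. \<nu>))) = 0"
      using emeasure_distr[OF pair diag[folded D_def]] emeasure_diagonal_eq_0[OF \<nu>.sigma_finite_measure_axioms atomless diag]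
      unfolding distr_PiM_coordinate_pair[OF \<nu>.prob_space_axioms ij] D_def by simp
    ultimately show "{\<omega> \<in> space (PiM I (\<lambda>_. \<nu>)). \<omega> i = \<omega> j} \<in> null_sets (PiM I (\<lambda>_. \<nu>))"
      by (simp add: null_setsI)
  qed auto
  then have "AE \<omega> in PiM I (\<lambda>_. \<nu>). \<forall>(i, j)\<in>I \<times> I. i \<noteq> j \<longrightarrow> \<omega> i \<noteq> \<omega> j"
    using \<open>finite I\<close> by (subst AE_finite_all) auto
  then show ?thesis by eventually_elim (auto simp: inj_on_def)
qed

lemma sets_rank_vec_PiM_eq:
  fixes \<nu> :: "real measure"
  assumes "sets \<nu> = sets borel"
  shows "{\<omega> \<in> space (PiM {..<n} (\<lambda>_. \<nu>)). rank_vec n \<omega> = a} \<in> sets (PiM {..<n} (\<lambda>_. \<nu>))"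
proof -
  have "(\<lambda>\<omega>. \<omega> i) \<in> borel_measurable (PiM {..<n} (\<lambda>_. \<nu>))" if "i < n" for i
  proof -
    have "i \<in> {..<n}" using that by simp
    then show ?thesis
      using measurable_component_singleton[of i "{..<n}" "\<lambda>_. \<nu>"] measurable_cong_sets[OF refl assms]
      by blast
  qed
  then show ?thesis using sets_rank_vec_eq[of n "\<lambda>i \<omega>. \<omega> i" "PiM {..<n} (\<lambda>_. \<nu>)" a] by simp
qed

lemma measure_rank_vec_PiM_comp_perm:
  fixes \<nu> :: "real measure"
  assumes \<nu>: "prob_space \<nu>" "sets \<nu> = sets borel" and \<tau>: "\<tau> permutes {..<n}"
  shows "measure (PiM {..<n} (\<lambda>_. \<nu>)) {\<omega> \<in> space (PiM {..<n} (\<lambda>_. \<nu>)). rank_vec n \<omega> = a \<circ> \<tau>}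
       = measure (PiM {..<n} (\<lambda>_. \<nu>)) {\<omega> \<in> space (PiM {..<n} (\<lambda>_. \<nu>)). rank_vec n \<omega> = a}"
proof -
  define P where "P = PiM {..<n} (\<lambda>_. \<nu>)"
  define T where "T \<omega> = (\<lambda>i\<in>{..<n}. \<omega> (\<tau> i))" for \<omega> :: "nat \<Rightarrow> real"
  have \<tau>_into: "inj_on \<tau> {..<n}" "\<tau> \<in> {..<n} \<rightarrow> {..<n}"
    using permutes_inj_on[OF \<tau>] permutes_in_image[OF \<tau>] by auto
  have T: "T \<in> measurable P P"
    unfolding T_def P_def
    by (rule measurable_restrict) (use \<tau>_into in \<open>auto intro!: measurable_component_singleton\<close>)
  have distr_T: "distr P P T = P"
    unfolding P_def T_def using distr_PiM_reindex[of "{..<n}" "\<lambda>_. \<nu>" \<tau> "{..<n}"] \<nu>(1) \<tau>_into by simp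
  have rank_T: "rank_vec n (T \<omega>) = rank_vec n \<omega> \<circ> \<tau>" for \<omega>
  proof -
    have "rank_vec n (T \<omega>) = rank_vec n (\<omega> \<circ> \<tau>)" by (rule rank_vec_cong) (simp add: T_def)
    then show ?thesis by (simp add: rank_vec_comp_perm[OF \<tau>])
  qed
  have cancel_\<tau>: "f \<circ> \<tau> = g \<circ> \<tau> \<longleftrightarrow> f = g" for f g :: "nat \<Rightarrow> nat"
    by (metis comp_assoc comp_id permutes_inv_o(1)[OF \<tau>])
  have sets_eq: "{\<omega> \<in> space P. rank_vec n \<omega> = b} \<in> sets P" for b
    unfolding P_def by (rule sets_rank_vec_PiM_eq[OF \<nu>(2)])
  have "{\<omega> \<in> space P. rank_vec n \<omega> = a} = T -` {\<omega> \<in> space P. rank_vec n \<omega> = a \<circ> \<tau>} \<inter> space P"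
    using measurable_space[OF T] by (auto simp: rank_T cancel_\<tau>)
  then have "measure P {\<omega> \<in> space P. rank_vec n \<omega> = a}
      = measure (distr P P T) {\<omega> \<in> space P. rank_vec n \<omega> = a \<circ> \<tau>}"
    using measure_distr[OF T sets_eq] by simp
  then show ?thesis using distr_T unfolding P_def by simp
qed

lemma prob_rank_vec_PiM:
  fixes \<nu> :: "real measure"
  assumes \<nu>: "prob_space \<nu>" "sets \<nu> = sets borel" and atomless: "\<And>x. emeasure \<nu> {x} = 0"
  shows "measure (PiM {..<n} (\<lambda>_. \<nu>)) {\<omega> \<in> space (PiM {..<n} (\<lambda>_. \<nu>)). rank_vec n \<omega> = a} = unif_rank n a"
proof -
  define P where "P = PiM {..<n} (\<lambda>_. \<nu>)"
  interpret P: prob_space P unfolding P_def by (rule prob_space_PiM) (use \<nu>(1) in auto)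
  define Q where "Q a = measure P {\<omega> \<in> space P. rank_vec n \<omega> = a}" for a
  have sets_eq: "{\<omega> \<in> space P. rank_vec n \<omega> = b} \<in> sets P" for b
    unfolding P_def by (rule sets_rank_vec_PiM_eq[OF \<nu>(2)])
  have AE_perm: "AE \<omega> in P. rank_vec n \<omega> \<in> rank_perms n"
    using AE_PiM_inj_on[OF \<nu> atomless finite_lessThan] unfolding P_def
    by eventually_elim (rule rank_vec_in_rank_perms)
  have Q_not_perm: "Q a = 0" if "a \<notin> rank_perms n" for a
    using AE_perm that unfolding Q_def
    by (subst P.prob_Collect_eq_0[OF sets_eq]) (auto elim: eventually_mono)
  obtain a0 where a0: "a0 \<in> rank_perms n" using rank_perms_nonempty by blast
  have Q_perm: "Q a = Q a0" if a: "a \<in> rank_perms n" for a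
  proof -
    obtain \<tau> where "\<tau> permutes {..<n}" "a = a0 \<circ> \<tau>" by (rule rank_perms_transitive[OF a0 a])
    then show ?thesis unfolding Q_def P_def by (simp add: measure_rank_vec_PiM_comp_perm[OF \<nu>])
  qed
  have "(\<Sum>a\<in>rank_perms n. Q a) = measure P (\<Union>a\<in>rank_perms n. {\<omega> \<in> space P. rank_vec n \<omega> = a})"
    unfolding Q_def using sets_eq finite_rank_perms
    by (intro P.finite_measure_finite_Union[symmetric]) (auto simp: disjoint_family_on_def)
  also have "\<dots> = 1"
  proof -
    have U: "(\<Union>a\<in>rank_perms n. {\<omega> \<in> space P. rank_vec n \<omega> = a}) = {\<omega> \<in> space P. rank_vec n \<omega> \<in> rank_perms n}"
      by auto
    have "{\<omega> \<in> space P. rank_vec n \<omega> \<in> rank_perms n} \<in> sets P"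
      unfolding U[symmetric] using sets_eq finite_rank_perms by (intro sets.finite_UN) auto
    then show ?thesis unfolding U using AE_perm by (simp add: P.prob_Collect_eq_1)
  qed
  finally have "real (card (rank_perms n)) * Q a0 = 1" using Q_perm by simp
  moreover have "card (rank_perms n) \<noteq> 0" using a0 finite_rank_perms by auto
  ultimately have "Q a0 = 1 / real (card (rank_perms n))" by (simp add: field_simps)
  then show ?thesis
    using Q_not_perm Q_perm unfolding unif_rank_def Q_def P_def by auto
qed

section \<open>Column ranks under the null hypothesis\<close>

locale null_sample = prob_space M for M :: "'a measure" +
  fixes X :: "nat \<Rightarrow> nat \<Rightarrow> 'a \<Rightarrow> real" and n p :: nat
  assumes n_pos: "1 \<le> n"
    and measurable_X: "\<And>i s. i < n \<Longrightarrow> s < p \<Longrightarrow> X i s \<in> borel_measurable M"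
    and indep_X: "indep_vars (\<lambda>_. borel) (\<lambda>(i, s). X i s) ({..<n} \<times> {..<p})"
    and identical_X: "\<And>i s. i < n \<Longrightarrow> s < p \<Longrightarrow> distr M borel (X i s) = distr M borel (X 0 s)"
    and atomless_X: "\<And>s x. s < p \<Longrightarrow> measure M {w \<in> space M. X 0 s w = x} = 0"
begin

definition col_rank :: "nat \<Rightarrow> 'a \<Rightarrow> nat \<Rightarrow> nat" where
  "col_rank s w = rank_vec n (\<lambda>i. X i s w)"

lemma col_rank_in_rank_space: "col_rank s w \<in> rank_space n"
  unfolding col_rank_def by (rule rank_vec_in_rank_space)

lemma sets_col_rank_eq: "s < p \<Longrightarrow> {w \<in> space M. col_rank s w = a} \<in> events"
  unfolding col_rank_def by (intro sets_rank_vec_eq measurable_X)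

lemma indep_col_rank: "indep_vars (\<lambda>_. count_space (rank_space n)) col_rank {..<p}"
proof -
  define K where "K s = {..<n} \<times> {s}" for s :: nat
  have "indep_vars (\<lambda>s. PiM (K s) (\<lambda>_. borel)) (\<lambda>s w. \<lambda>k\<in>K s. (\<lambda>(i, s). X i s) k w) {..<p}"
    by (rule indep_vars_restrict[OF indep_X]) (auto simp: K_def disjoint_family_on_def)
  then have "indep_vars (\<lambda>_. count_space (rank_space n))
      (\<lambda>s w. rank_vec n (\<lambda>i. (\<lambda>k\<in>K s. (\<lambda>(i, s). X i s) k w) (i, s))) {..<p}"
    by (rule indep_vars_compose2) (intro measurable_rank_vec measurable_component_singleton, simp add: K_def)
  then show ?thesis
  proof (rule indep_vars_cong[THEN iffD1, rotated -1])
    fix s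
    show "(\<lambda>w. rank_vec n (\<lambda>i. (\<lambda>k\<in>K s. (\<lambda>(i, s). X i s) k w) (i, s))) = col_rank s"
      unfolding col_rank_def by (rule ext, rule rank_vec_cong) (simp add: K_def)
  qed simp_all
qed

lemma distr_column:
  assumes s: "s < p"
  shows "distr M (PiM {..<n} (\<lambda>_. borel)) (\<lambda>w. \<lambda>i\<in>{..<n}. X i s w)
       = PiM {..<n} (\<lambda>_. distr M borel (X 0 s))"
proof -
  \<comment> \<open>\<open>indep_vars_iff_distr_eq_PiM\<close> needs every \<open>Y i\<close> to be measurable, also for \<open>i \<ge> n\<close>.\<close>
  define Y where "Y i = (if i < n then X i s else (\<lambda>_. 0))" for i
  have column_indep: "indep_vars (\<lambda>_. borel) (\<lambda>(i, s). X i s) ((\<lambda>i. (i, s)) ` {..<n})"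
    using s by (intro indep_vars_subset[OF indep_X]) auto
  have "indep_vars (\<lambda>_. borel) (\<lambda>i. X i s) {..<n}"
    using indep_vars_reindex[OF column_indep] by (simp add: inj_on_def)
  then have indep_Y: "indep_vars (\<lambda>_. borel) Y {..<n}"
    by (rule indep_vars_cong[THEN iffD1, rotated -1]) (auto simp: Y_def)
  have Y: "random_variable borel (Y i)" for i using measurable_X s by (auto simp: Y_def)
  have "{..<n} \<noteq> {}" using n_pos by (simp add: lessThan_empty_iff)
  then have "distr M (PiM {..<n} (\<lambda>_. borel)) (\<lambda>w. \<lambda>i\<in>{..<n}. Y i w)
      = PiM {..<n} (\<lambda>i. distr M borel (Y i))"
    by (rule indep_vars_iff_distr_eq_PiM[THEN iffD1, OF _ Y indep_Y])
  moreover have "(\<lambda>w. \<lambda>i\<in>{..<n}. Y i w) = (\<lambda>w. \<lambda>i\<in>{..<n}. X i s w)"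
    by (rule ext, rule restrict_ext) (simp add: Y_def)
  moreover have "PiM {..<n} (\<lambda>i. distr M borel (Y i)) = PiM {..<n} (\<lambda>_. distr M borel (X 0 s))"
  proof (intro PiM_cong refl)
    fix i assume "i \<in> {..<n}"
    then have "Y i = X i s" by (simp add: Y_def)
    then show "distr M borel (Y i) = distr M borel (X 0 s)" using identical_X[of i s] s \<open>i \<in> {..<n}\<close> by simp
  qed
  ultimately show ?thesis by simp
qed

lemma prob_col_rank:
  assumes s: "s < p"
  shows "prob {w \<in> space M. col_rank s w = a} = unif_rank n a"
proof -
  define \<nu> where "\<nu> = distr M borel (X 0 s)"
  define column where "column w = (\<lambda>i\<in>{..<n}. X i s w)" for w
  define S where "S = {\<omega> \<in> space (PiM {..<n} (\<lambda>_. borel :: real measure)). rank_vec n \<omega> = a}"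
  have X0: "X 0 s \<in> borel_measurable M" using measurable_X s n_pos by auto
  have \<nu>: "prob_space \<nu>" "sets \<nu> = sets borel"
    unfolding \<nu>_def by (simp_all add: prob_space_distr[OF X0])
  have atomless: "emeasure \<nu> {x} = 0" for x
  proof -
    have "emeasure \<nu> {x} = emeasure M {w \<in> space M. X 0 s w = x}"
      unfolding \<nu>_def by (subst emeasure_distr[OF X0]) (auto intro!: arg_cong[where f = "emeasure M"])
    also have "\<dots> = 0" using atomless_X[OF s] by (simp add: emeasure_eq_measure)
    finally show ?thesis .
  qed
  have column: "column \<in> measurable M (PiM {..<n} (\<lambda>_. borel))"
    unfolding column_def using measurable_X s by (intro measurable_restrict) auto
  have S: "S \<in> sets (PiM {..<n} (\<lambda>_. borel))"
    unfolding S_def by (rule sets_rank_vec_PiM_eq) simp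
  have "{w \<in> space M. col_rank s w = a} = column -` S \<inter> space M"
  proof -
    have "rank_vec n (column w) = col_rank s w" for w
      unfolding col_rank_def column_def by (rule rank_vec_cong) simp
    then show ?thesis using measurable_space[OF column] unfolding S_def by auto
  qed
  then have "prob {w \<in> space M. col_rank s w = a} = measure (PiM {..<n} (\<lambda>_. \<nu>)) S"
    using measure_distr[OF column S] distr_column[OF s] unfolding column_def \<nu>_def by simp
  also have "\<dots> = unif_rank n a"
    using prob_rank_vec_PiM[OF \<nu> atomless] sets_eq_imp_space_eq[OF \<nu>(2)]
    unfolding S_def by (simp add: space_PiM)
  finally show ?thesis .
qed

lemma indep_col_rank_list:
  assumes "distinct js" "set js \<subseteq> {..<p}"
  shows "indep_vars (\<lambda>_. count_space (rank_space n)) (\<lambda>i. col_rank (js ! i)) {..<length js}"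
proof -
  have indep: "indep_vars (\<lambda>_. count_space (rank_space n)) col_rank ((!) js ` {..<length js})"
    using assms(2) by (intro indep_vars_subset[OF indep_col_rank]) (auto simp: nth_mem subset_iff)
  have "inj_on ((!) js) {..<length js}" using inj_on_nth[OF assms(1)] by simp
  from indep_vars_reindex[OF indep this] show ?thesis by simp
qed

lemma map_col_rank_eq_iff:
  "length xs = length js \<Longrightarrow> map (\<lambda>j. col_rank j w) js = xs \<longleftrightarrow> (\<forall>i<length js. col_rank (js ! i) w = xs ! i)"
  by (auto simp: list_eq_iff_nth_eq)

lemma prob_col_ranks_eq:
  assumes js: "distinct js" "set js \<subseteq> {..<p}"
    and xs: "set xs \<subseteq> rank_space n" "length xs = length js"
  shows "prob {w \<in> space M. map (\<lambda>j. col_rank j w) js = xs} = (\<Prod>x\<leftarrow>xs. unif_rank n x)"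
proof (cases "js = []")
  case True
  then show ?thesis using xs by (simp add: prob_space)
next
  case False
  have "{w \<in> space M. map (\<lambda>j. col_rank j w) js = xs}
      = (\<Inter>i\<in>{..<length js}. col_rank (js ! i) -` {xs ! i} \<inter> space M)"
    using False by (auto simp: map_col_rank_eq_iff[OF xs(2)])
  also have "prob \<dots> = (\<Prod>i\<in>{..<length js}. prob (col_rank (js ! i) -` {xs ! i} \<inter> space M))"
    using False xs by (intro indep_varsD_finite[OF indep_col_rank_list[OF js]]) (auto simp: lessThan_empty_iff)
  also have "\<dots> = (\<Prod>i\<in>{..<length js}. unif_rank n (xs ! i))"
  proof (rule prod.cong[OF refl])
    fix i assume "i \<in> {..<length js}"
    then have "js ! i < p" using js(2) nth_mem by blast
    moreover have "col_rank (js ! i) -` {xs ! i} \<inter> space M = {w \<in> space M. col_rank (js ! i) w = xs ! i}"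
      by auto
    ultimately show "prob (col_rank (js ! i) -` {xs ! i} \<inter> space M) = unif_rank n (xs ! i)"
      by (simp add: prob_col_rank)
  qed
  also have "\<dots> = (\<Prod>x\<leftarrow>xs. unif_rank n x)"
    using xs by (simp add: prod.list_conv_set_nth lessThan_atLeast0)
  finally show ?thesis .
qed

lemma integral_col_ranks:
  fixes F :: "(nat \<Rightarrow> nat) list \<Rightarrow> real"
  assumes js: "distinct js" "set js \<subseteq> {..<p}"
  shows "integrable M (\<lambda>w. F (map (\<lambda>j. col_rank j w) js))"
    and "(\<integral>w. F (map (\<lambda>j. col_rank j w) js) \<partial>M)
       = (\<Sum>xs\<in>{xs. set xs \<subseteq> rank_space n \<and> length xs = length js}. F xs * (\<Prod>x\<leftarrow>xs. unif_rank n x))"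
proof -
  define L where "L = {xs. set xs \<subseteq> rank_space n \<and> length xs = length js}"
  have L: "finite L" unfolding L_def using finite_lists_length_eq[OF finite_rank_space] .
  have range: "map (\<lambda>j. col_rank j w) js \<in> L" for w
    unfolding L_def using col_rank_in_rank_space by auto
  have events: "{w \<in> space M. map (\<lambda>j. col_rank j w) js = xs} \<in> events" if "xs \<in> L" for xs
  proof -
    have "{w \<in> space M. map (\<lambda>j. col_rank j w) js = xs}
        = {w \<in> space M. \<forall>i\<in>{..<length js}. col_rank (js ! i) w = xs ! i}"
      using that map_col_rank_eq_iff unfolding L_def by auto
    also have "\<dots> \<in> events"
      using js(2) nth_mem by (intro sets.sets_Collect_finite_All sets_col_rank_eq) auto
    finally show ?thesis .
  qed
  show "integrable M (\<lambda>w. F (map (\<lambda>j. col_rank j w) js))"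
    by (rule integral_finite_valued(1)[OF L range events])
  have "(\<integral>w. F (map (\<lambda>j. col_rank j w) js) \<partial>M)
      = (\<Sum>xs\<in>L. F xs * prob {w \<in> space M. map (\<lambda>j. col_rank j w) js = xs})"
    by (rule integral_finite_valued(2)[OF L range events])
  also have "\<dots> = (\<Sum>xs\<in>L. F xs * (\<Prod>x\<leftarrow>xs. unif_rank n x))"
    using prob_col_ranks_eq[OF js] by (intro sum.cong) (auto simp: L_def)
  finally show "(\<integral>w. F (map (\<lambda>j. col_rank j w) js) \<partial>M)
      = (\<Sum>xs\<in>{xs. set xs \<subseteq> rank_space n \<and> length xs = length js}. F xs * (\<Prod>x\<leftarrow>xs. unif_rank n x))"
    unfolding L_def .
qed

lemma integral_pair_stat:
  assumes "s < p" "t < p" "s \<noteq> t"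
  shows "integrable M (\<lambda>w. \<phi> (G (col_rank s w) (col_rank t w)))"
    and "(\<integral>w. \<phi> (G (col_rank s w) (col_rank t w)) \<partial>M) = rank_expectation n G \<phi>"
proof -
  have js: "distinct [s, t]" "set [s, t] \<subseteq> {..<p}" using assms by auto
  show "integrable M (\<lambda>w. \<phi> (G (col_rank s w) (col_rank t w)))"
    using integral_col_ranks(1)[OF js, of "\<lambda>xs. \<phi> (G (xs ! 0) (xs ! 1))"] by simp
  show "(\<integral>w. \<phi> (G (col_rank s w) (col_rank t w)) \<partial>M) = rank_expectation n G \<phi>"
    using integral_col_ranks(2)[OF js, of "\<lambda>xs. \<phi> (G (xs ! 0) (xs ! 1))",
        unfolded length_Cons list.size(3) sum_lists_length_Suc lists_length_0]
    by (simp add: rank_expectation_def mult_ac)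
qed

lemma integral_mult_stats_shared_col:
  assumes G1: "perm_invariant n G1" and G2: "perm_invariant n G2"
    and "k < p" "a < p" "b < p" "k \<noteq> a" "k \<noteq> b" "a \<noteq> b"
  shows "integrable M (\<lambda>w. \<phi> (G1 (col_rank k w) (col_rank a w)) * \<psi> (G2 (col_rank k w) (col_rank b w)))"
    and "(\<integral>w. \<phi> (G1 (col_rank k w) (col_rank a w)) * \<psi> (G2 (col_rank k w) (col_rank b w)) \<partial>M)
       = rank_expectation n G1 \<phi> * rank_expectation n G2 \<psi>"
proof -
  have js: "distinct [k, a, b]" "set [k, a, b] \<subseteq> {..<p}" using assms by auto
  define F where "F xs = \<phi> (G1 (xs ! 0) (xs ! 1)) * \<psi> (G2 (xs ! 0) (xs ! 2))" for xs
  show "integrable M (\<lambda>w. \<phi> (G1 (col_rank k w) (col_rank a w)) * \<psi> (G2 (col_rank k w) (col_rank b w)))"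
    using integral_col_ranks(1)[OF js, of F] by (simp add: F_def)
  show "(\<integral>w. \<phi> (G1 (col_rank k w) (col_rank a w)) * \<psi> (G2 (col_rank k w) (col_rank b w)) \<partial>M)
      = rank_expectation n G1 \<phi> * rank_expectation n G2 \<psi>"
    using integral_col_ranks(2)[OF js, of F, unfolded length_Cons list.size(3) sum_lists_length_Suc lists_length_0]
      rank_expectation_mult_shared[OF G1 G2, of \<phi> \<psi>]
    by (simp add: F_def mult_ac)
qed

lemma integral_mult_stats_disjoint:
  assumes "s < p" "t < p" "u < p" "v < p" "distinct [s, t, u, v]"
  shows "integrable M (\<lambda>w. \<phi> (G1 (col_rank s w) (col_rank t w)) * \<psi> (G2 (col_rank u w) (col_rank v w)))"
    and "(\<integral>w. \<phi> (G1 (col_rank s w) (col_rank t w)) * \<psi> (G2 (col_rank u w) (col_rank v w)) \<partial>M)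
       = rank_expectation n G1 \<phi> * rank_expectation n G2 \<psi>"
proof -
  have js: "distinct [s, t, u, v]" "set [s, t, u, v] \<subseteq> {..<p}" using assms by auto
  define F where "F xs = \<phi> (G1 (xs ! 0) (xs ! 1)) * \<psi> (G2 (xs ! 2) (xs ! 3))" for xs
  show "integrable M (\<lambda>w. \<phi> (G1 (col_rank s w) (col_rank t w)) * \<psi> (G2 (col_rank u w) (col_rank v w)))"
    using integral_col_ranks(1)[OF js, of F] by (simp add: F_def)
  show "(\<integral>w. \<phi> (G1 (col_rank s w) (col_rank t w)) * \<psi> (G2 (col_rank u w) (col_rank v w)) \<partial>M)
      = rank_expectation n G1 \<phi> * rank_expectation n G2 \<psi>"
    using integral_col_ranks(2)[OF js, of F, unfolded length_Cons list.size(3) sum_lists_length_Suc lists_length_0]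
      rank_expectation_mult_disjoint[of \<phi> G1 \<psi> G2 n]
    by (simp add: F_def mult_ac)
qed

lemma integral_mult_pair_stats:
  assumes G: "perm_invariant n G" and st: "(s, t) \<in> pairs p" and uv: "(u, v) \<in> pairs p"
    and ne: "(s, t) \<noteq> (u, v)"
  shows "integrable M (\<lambda>w. \<phi> (G (col_rank s w) (col_rank t w)) * \<psi> (G (col_rank u w) (col_rank v w)))
    \<and> (\<integral>w. \<phi> (G (col_rank s w) (col_rank t w)) * \<psi> (G (col_rank u w) (col_rank v w)) \<partial>M)
        = rank_expectation n G \<phi> * rank_expectation n G \<psi>"
proof -
  have ord: "s < t" "t < p" "u < v" "v < p" using st uv unfolding pairs_def by auto
  then have p: "s < p" "t < p" "u < p" "v < p" "s \<noteq> t" "u \<noteq> v" by auto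
  have G': "perm_invariant n (\<lambda>a b. G b a)" by (rule perm_invariant_swap[OF G])
  \<comment> \<open>Distinct pairs share at most one column; swapping the arguments of \<open>G\<close> moves it to the front.\<close>
  consider "s = u" | "s = v" | "t = u" | "t = v" | "distinct [s, t, u, v]"
    using ord by auto
  then show ?thesis
  proof cases
    case 1
    then have "s \<noteq> v" "t \<noteq> v" using ne ord by auto
    with 1 p show ?thesis using integral_mult_stats_shared_col[OF G G p(1,2,4,5), of \<phi> \<psi>] by simp
  next
    case 2
    then have "s \<noteq> u" "t \<noteq> u" using ord by auto
    with 2 p show ?thesis
      using integral_mult_stats_shared_col[OF G G' p(1,2,3,5), of \<phi> \<psi>] rank_expectation_swap[of n G \<psi>] by simp
  next
    case 3
    then have "t \<noteq> s" "t \<noteq> v" "s \<noteq> v" using ord by auto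
    with 3 p show ?thesis
      using integral_mult_stats_shared_col[OF G' G p(2,1,4), of \<phi> \<psi>] rank_expectation_swap[of n G \<phi>] by simp
  next
    case 4
    then have "t \<noteq> s" "t \<noteq> u" "s \<noteq> u" using ne ord by auto
    with 4 p show ?thesis
      using integral_mult_stats_shared_col[OF G' G' p(2,1,3), of \<phi> \<psi>] rank_expectation_swap[of n G]
      by simp
  next
    case 5
    then show ?thesis using integral_mult_stats_disjoint[OF p(1-4) 5, of \<phi> G \<psi> G] by simp
  qed
qed

end

section \<open>Moments of the power-sum statistic\<close>

lemma (in prob_space) integral_mult_sums_uncorrelated:
  fixes Y Z :: "'i \<Rightarrow> 'a \<Rightarrow> real" and c :: real
  assumes I: "finite I"
    and integrable: "\<And>i j. i \<in> I \<Longrightarrow> j \<in> I \<Longrightarrow> integrable M (\<lambda>w. Y i w * Z j w)"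
    and uncorrelated: "\<And>i j. i \<in> I \<Longrightarrow> j \<in> I \<Longrightarrow> i \<noteq> j \<Longrightarrow> (\<integral>w. Y i w * Z j w \<partial>M) = 0"
    and diagonal: "\<And>i. i \<in> I \<Longrightarrow> (\<integral>w. Y i w * Z i w \<partial>M) = c"
  shows "(\<integral>w. (\<Sum>i\<in>I. Y i w) * (\<Sum>j\<in>I. Z j w) \<partial>M) = real (card I) * c"
proof -
  have "(\<integral>w. (\<Sum>i\<in>I. Y i w) * (\<Sum>j\<in>I. Z j w) \<partial>M) = (\<integral>w. (\<Sum>i\<in>I. \<Sum>j\<in>I. Y i w * Z j w) \<partial>M)"
    by (simp add: sum_product)
  also have "\<dots> = (\<Sum>i\<in>I. \<Sum>j\<in>I. \<integral>w. Y i w * Z j w \<partial>M)"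
    using integrable by (simp add: Bochner_Integration.integral_sum Bochner_Integration.integrable_sum)
  also have "\<dots> = (\<Sum>i\<in>I. c)"
  proof (rule sum.cong[OF refl])
    fix i assume i: "i \<in> I"
    have "(\<Sum>j\<in>I. \<integral>w. Y i w * Z j w \<partial>M) = (\<Sum>j\<in>I. if j = i then c else 0)"
      using i uncorrelated diagonal by (intro sum.cong) auto
    then show "(\<Sum>j\<in>I. \<integral>w. Y i w * Z j w \<partial>M) = c" using I i by simp
  qed
  finally show ?thesis by simp
qed

lemma finite_pairs: "finite (pairs p)"
  by (rule finite_subset[of _ "{..<p} \<times> {..<p}"]) (auto simp: pairs_def)

lemma card_pairs: "card (pairs p) = p choose 2"
proof (induction p)
  case 0
  then show ?case by (simp add: pairs_def)
next
  case (Suc p)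
  have "pairs (Suc p) = pairs p \<union> (\<lambda>s. (s, p)) ` {..<p}" unfolding pairs_def by auto
  moreover have "pairs p \<inter> (\<lambda>s. (s, p)) ` {..<p} = {}" unfolding pairs_def by auto
  ultimately have "card (pairs (Suc p)) = card (pairs p) + p"
    using finite_pairs by (simp add: card_Un_disjoint card_image inj_on_def)
  then show ?case using Suc.IH by (simp add: numeral_2_eq_2)
qed

locale rank_correlation = null_sample +
  fixes G :: "(nat \<Rightarrow> nat) \<Rightarrow> (nat \<Rightarrow> nat) \<Rightarrow> real" and A :: "nat \<Rightarrow> nat \<Rightarrow> 'a \<Rightarrow> real"
  assumes G_invariant: "perm_invariant n G"
    and A_eq: "\<And>s t w. A s t w = G (col_rank s w) (col_rank t w)"
    and two_le_p: "2 \<le> p"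
begin

abbreviation mean_G :: real where
  "mean_G \<equiv> rank_expectation n G (\<lambda>z. z)"

abbreviation moment_G :: "nat \<Rightarrow> real" where
  "moment_G k \<equiv> rank_expectation n G (\<lambda>z. (z - mean_G) ^ k)"

definition summand :: "nat \<Rightarrow> real \<Rightarrow> real" where
  "summand k z = (z - mean_G) ^ k - moment_G k"

lemma pair_01: "(0, 1) \<in> pairs p"
  using two_le_p unfolding pairs_def by auto

lemma integral_fun_A:
  assumes "P \<in> pairs p"
  shows "integrable M (\<lambda>w. \<phi> (A (fst P) (snd P) w))"
    and "(\<integral>w. \<phi> (A (fst P) (snd P) w) \<partial>M) = rank_expectation n G \<phi>"
  using integral_pair_stat[of "fst P" "snd P"] assms unfolding A_eq pairs_def by auto

lemma integral_mult_fun_A: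
  assumes "P \<in> pairs p" "Q \<in> pairs p" "P \<noteq> Q"
  shows "integrable M (\<lambda>w. \<phi> (A (fst P) (snd P) w) * \<psi> (A (fst Q) (snd Q) w))"
    and "(\<integral>w. \<phi> (A (fst P) (snd P) w) * \<psi> (A (fst Q) (snd Q) w) \<partial>M)
       = rank_expectation n G \<phi> * rank_expectation n G \<psi>"
  using integral_mult_pair_stats[OF G_invariant, of "fst P" "snd P" "fst Q" "snd Q" \<phi> \<psi>] assms
  unfolding A_eq by auto

lemma centered_A:
  assumes "(s, t) \<in> pairs p"
  shows "centered M A s t w = A s t w - mean_G"
  unfolding centered_def using integral_fun_A(2)[OF assms, of "\<lambda>z. z"] by simp

lemma integral_centered_power: "(\<integral>w. (centered M A 0 1 w) ^ k \<partial>M) = moment_G k"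
  using integral_fun_A(2)[OF pair_01, of "\<lambda>z. (z - mean_G) ^ k"] centered_A[OF pair_01] by simp

lemma S_stat_eq_sum_summand: "S_stat M A p k w = (\<Sum>P\<in>pairs p. summand k (A (fst P) (snd P) w))"
  unfolding S_stat_def mu_q_def integral_centered_power
  by (intro sum.cong refl) (auto simp: centered_A summand_def)

lemma rank_expectation_summand: "rank_expectation n G (summand k) = 0"
  unfolding summand_def by (simp add: rank_expectation_diff rank_expectation_const)

lemma rank_expectation_mult_summand:
  "rank_expectation n G (\<lambda>z. summand k1 z * summand k2 z) = moment_G (k1 + k2) - moment_G k1 * moment_G k2"
proof -
  have "(\<lambda>z. summand k1 z * summand k2 z) = (\<lambda>z. ((z - mean_G) ^ (k1 + k2) - moment_G k2 * (z - mean_G) ^ k1)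
      - (moment_G k1 * (z - mean_G) ^ k2 - moment_G k1 * moment_G k2))"
    unfolding summand_def by (simp add: fun_eq_iff power_add algebra_simps)
  then show ?thesis by (simp add: rank_expectation_diff rank_expectation_cmult rank_expectation_const)
qed

lemma integral_S_stat: "(\<integral>w. S_stat M A p k w \<partial>M) = 0"
proof -
  have "(\<integral>w. S_stat M A p k w \<partial>M) = (\<Sum>P\<in>pairs p. \<integral>w. summand k (A (fst P) (snd P) w) \<partial>M)"
    unfolding S_stat_eq_sum_summand using integral_fun_A(1) by (rule Bochner_Integration.integral_sum)
  also have "\<dots> = 0" by (simp add: integral_fun_A(2) rank_expectation_summand)
  finally show ?thesis .
qed

lemma integral_mult_S_stat:
  "(\<integral>w. S_stat M A p k1 w * S_stat M A p k2 w \<partial>M)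
     = real (p choose 2) * (moment_G (k1 + k2) - moment_G k1 * moment_G k2)"
  unfolding S_stat_eq_sum_summand card_pairs[symmetric] rank_expectation_mult_summand[symmetric]
proof (rule integral_mult_sums_uncorrelated[OF finite_pairs])
  fix P Q assume "P \<in> pairs p" "Q \<in> pairs p"
  then show "integrable M (\<lambda>w. summand k1 (A (fst P) (snd P) w) * summand k2 (A (fst Q) (snd Q) w))"
    using integral_fun_A(1)[of P "\<lambda>z. summand k1 z * summand k2 z"] integral_mult_fun_A(1)
    by (cases "P = Q") auto
next
  fix P Q assume "P \<in> pairs p" "Q \<in> pairs p" "P \<noteq> Q"
  then show "(\<integral>w. summand k1 (A (fst P) (snd P) w) * summand k2 (A (fst Q) (snd Q) w) \<partial>M) = 0"
    by (simp add: integral_mult_fun_A(2) rank_expectation_summand)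
next
  fix P assume "P \<in> pairs p"
  then show "(\<integral>w. summand k1 (A (fst P) (snd P) w) * summand k2 (A (fst P) (snd P) w) \<partial>M)
      = rank_expectation n G (\<lambda>z. summand k1 z * summand k2 z)"
    using integral_fun_A(2)[of P "\<lambda>z. summand k1 z * summand k2 z"] by simp
qed

lemma v_q_eq: "v_q M A q = moment_G (q + q) - moment_G q * moment_G q"
proof -
  have "v_q M A q = (\<integral>w. summand q (A 0 1 w) * summand q (A 0 1 w) \<partial>M)"
    unfolding v_q_def mu_q_def integral_centered_power summand_def
    using centered_A[OF pair_01] by (simp add: power2_eq_square)
  also have "\<dots> = moment_G (q + q) - moment_G q * moment_G q"
    using integral_fun_A(2)[OF pair_01, of "\<lambda>z. summand q z * summand q z"]
    by (simp add: rank_expectation_mult_summand)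
  finally show ?thesis .
qed

end

section \<open>The classes V, W and Q\<close>

definition V_rank_stat ::
    "(real \<Rightarrow> real) \<Rightarrow> (real \<Rightarrow> real) \<Rightarrow> nat \<Rightarrow> (nat \<Rightarrow> nat) \<Rightarrow> (nat \<Rightarrow> nat) \<Rightarrow> real" where
  "V_rank_stat f g n a b = (\<Sum>i<n. f (real (a i) / real (n + 1)) * g (real (b i) / real (n + 1))) / real n"

definition U_rank_stat ::
    "((real \<times> real) list \<Rightarrow> real) \<Rightarrow> nat \<Rightarrow> nat \<Rightarrow> (nat \<Rightarrow> nat) \<Rightarrow> (nat \<Rightarrow> nat) \<Rightarrow> real" where
  "U_rank_stat h m n a b =
     (\<Sum>I\<in>{I. I \<subseteq> {..<n} \<and> card I = m}. h (map (\<lambda>i. (real (a i), real (b i))) (sorted_list_of_set I)))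
       / real (n choose m)"

lemma V_stat_eq_V_rank_stat:
  "V_stat f g X n s t w = V_rank_stat f g n (rank_vec n (\<lambda>i. X i s w)) (rank_vec n (\<lambda>i. X i t w))"
  unfolding V_stat_def V_rank_stat_def rank_of_def rank_vec_def by simp

lemma U_stat_eq_U_rank_stat:
  assumes "rank_based_kernel m h"
  shows "U_stat h m X n s t w = U_rank_stat h m n (rank_vec n (\<lambda>i. X i s w)) (rank_vec n (\<lambda>i. X i t w))"
proof -
  have "h (map (\<lambda>i. (X i s w, X i t w)) L)
      = h (map (\<lambda>i. (real (rank_vec n (\<lambda>i. X i s w) i), real (rank_vec n (\<lambda>i. X i t w) i))) L)"
    if "length L = m" "set L \<subseteq> {..<n}" for L
    using assms that rank_vec_le_iff[of _ n _ "\<lambda>i. X i s w"] rank_vec_le_iff[of _ n _ "\<lambda>i. X i t w"]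
    unfolding rank_based_kernel_def by (simp add: subset_iff)
  moreover have "finite I" if "I \<subseteq> {..<n}" for I using that finite_subset by blast
  ultimately show ?thesis
    unfolding U_stat_def U_rank_stat_def by (intro arg_cong[where f = "\<lambda>x. x / _"] sum.cong refl) auto
qed

lemma perm_invariant_V_rank_stat: "perm_invariant n (V_rank_stat f g n)"
  unfolding perm_invariant_def
proof (intro allI impI)
  fix \<tau> a b assume \<tau>: "\<tau> permutes {..<n}"
  show "V_rank_stat f g n (a \<circ> \<tau>) (b \<circ> \<tau>) = V_rank_stat f g n a b"
    unfolding V_rank_stat_def
    using sum.permute[OF \<tau>, of "\<lambda>i. f (real (a i) / real (n + 1)) * g (real (b i) / real (n + 1))"]
    by (simp add: comp_def)
qed

lemma sum_card_subsets_image_perm: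
  assumes \<tau>: "\<tau> permutes {..<n}"
  shows "(\<Sum>I\<in>{I. I \<subseteq> {..<n} \<and> card I = m}. F (\<tau> ` I)) = (\<Sum>I\<in>{I. I \<subseteq> {..<n} \<and> card I = m}. F I)"
proof (rule sum.reindex_bij_witness[of _ "(`) (inv \<tau>)" "(`) \<tau>"])
  have \<tau>': "inv \<tau> permutes {..<n}" using permutes_inv[OF \<tau>] .
  fix I assume I: "I \<in> {I. I \<subseteq> {..<n} \<and> card I = m}"
  show "inv \<tau> ` \<tau> ` I = I" "\<tau> ` inv \<tau> ` I = I"
    by (simp_all add: image_comp permutes_inv_o[OF \<tau>])
  show "\<tau> ` I \<in> {I. I \<subseteq> {..<n} \<and> card I = m}" "inv \<tau> ` I \<in> {I. I \<subseteq> {..<n} \<and> card I = m}"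
  proof -
    have "\<tau> ` I \<subseteq> {..<n}" "inv \<tau> ` I \<subseteq> {..<n}"
      using I permutes_in_image[OF \<tau>] permutes_in_image[OF \<tau>'] by blast+
    moreover have "card (\<tau> ` I) = m" "card (inv \<tau> ` I) = m"
      using I permutes_inj[OF \<tau>] permutes_inj[OF \<tau>'] by (auto simp: card_image inj_on_subset)
    ultimately show "\<tau> ` I \<in> {I. I \<subseteq> {..<n} \<and> card I = m}" "inv \<tau> ` I \<in> {I. I \<subseteq> {..<n} \<and> card I = m}"
      by auto
  qed
qed simp

lemma symmetric_kernel_map_image:
  assumes "symmetric_kernel m h" "finite I" "card I = m" "inj \<tau>"
  shows "h (map (z \<circ> \<tau>) (sorted_list_of_set I)) = h (map z (sorted_list_of_set (\<tau> ` I)))"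
proof -
  have "mset (map \<tau> (sorted_list_of_set I)) = mset (sorted_list_of_set (\<tau> ` I))"
    using assms(2,4) by (intro set_eq_iff_mset_eq_distinct[THEN iffD1])
      (auto simp: distinct_map inj_on_subset[OF assms(4)])
  then have "mset (map z (map \<tau> (sorted_list_of_set I))) = mset (map z (sorted_list_of_set (\<tau> ` I)))"
    by (metis mset_map)
  then show ?thesis using assms(1,2,3) unfolding symmetric_kernel_def by (simp add: map_map)
qed

lemma perm_invariant_U_rank_stat:
  assumes "symmetric_kernel m h"
  shows "perm_invariant n (U_rank_stat h m n)"
  unfolding perm_invariant_def
proof (intro allI impI)
  fix \<tau> a b :: "nat \<Rightarrow> nat" assume \<tau>: "\<tau> permutes {..<n}"
  define z where "z i = (real (a i), real (b i))" for i
  define S where "S = {I. I \<subseteq> {..<n} \<and> card I = m}"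
  have "(\<Sum>I\<in>S. h (map (z \<circ> \<tau>) (sorted_list_of_set I))) = (\<Sum>I\<in>S. h (map z (sorted_list_of_set (\<tau> ` I))))"
    unfolding S_def using finite_subset[of _ "{..<n}"] permutes_inj[OF \<tau>]
    by (intro sum.cong refl symmetric_kernel_map_image[OF assms]) auto
  also have "\<dots> = (\<Sum>I\<in>S. h (map z (sorted_list_of_set I)))"
    unfolding S_def by (rule sum_card_subsets_image_perm[OF \<tau>])
  finally show "U_rank_stat h m n (a \<circ> \<tau>) (b \<circ> \<tau>) = U_rank_stat h m n a b"
    unfolding U_rank_stat_def S_def z_def by (simp add: comp_def)
qed

lemma rank_stat_representation:
  assumes "(\<exists>f g. A = V_stat f g X n)
         \<or> (\<exists>h m. kernel_class M X p m h 1 \<and> A = U_stat h m X n)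
         \<or> (\<exists>h m. kernel_class M X p m h 2 \<and> A = U_stat h m X n)"
  obtains G where "perm_invariant n G"
    "\<And>s t w. A s t w = G (rank_vec n (\<lambda>i. X i s w)) (rank_vec n (\<lambda>i. X i t w))"
proof -
  consider (V) f g where "A = V_stat f g X n"
    | (U) h m d where "kernel_class M X p m h d" "A = U_stat h m X n"
    using assms by blast
  then show ?thesis
  proof cases
    case V
    then show ?thesis
      using that[OF perm_invariant_V_rank_stat] by (simp add: V_stat_eq_V_rank_stat)
  next
    case U
    then have "symmetric_kernel m h" "rank_based_kernel m h" unfolding kernel_class_def by auto
    with U show ?thesis
      using that[OF perm_invariant_U_rank_stat] by (simp add: U_stat_eq_U_rank_stat)
  qed
qed

theorem proposition1:
  fixes M :: "'a measure" and X :: "nat \<Rightarrow> nat \<Rightarrow> 'a \<Rightarrow> real"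
    and A :: "nat \<Rightarrow> nat \<Rightarrow> 'a \<Rightarrow> real" and n p q q1 q2 :: nat
  assumes "prob_space M"
    and "1 \<le> n" and "2 \<le> p"
    and "\<forall>i<n. \<forall>s<p. X i s \<in> borel_measurable M"
    and "prob_space.indep_vars M (\<lambda>_. borel) (\<lambda>(i, s). X i s) ({..<n} \<times> {..<p})"
    and "\<forall>i<n. \<forall>s<p. distr M borel (X i s) = distr M borel (X 0 s)"
    and "\<forall>s<p. \<forall>x. measure M {w \<in> space M. X 0 s w = x} = 0"
    and "(\<exists>f g. A = V_stat f g X n)
         \<or> (\<exists>h m. kernel_class M X p m h 1 \<and> A = U_stat h m X n)
         \<or> (\<exists>h m. kernel_class M X p m h 2 \<and> A = U_stat h m X n)"
    and "even q" and "2 \<le> q"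
    and "even q1" and "2 \<le> q1" and "even q2" and "2 \<le> q2"
  shows "(\<integral>w. S_stat M A p q w \<partial>M) = 0
    \<and> (\<integral>w. (S_stat M A p q w - (\<integral>v. S_stat M A p q v \<partial>M))\<^sup>2 \<partial>M)
        = real (p choose 2) * v_q M A q
    \<and> (\<integral>w. (S_stat M A p q1 w - (\<integral>v. S_stat M A p q1 v \<partial>M))
           * (S_stat M A p q2 w - (\<integral>v. S_stat M A p q2 v \<partial>M)) \<partial>M)
        = real (p choose 2) *
          ((\<integral>w. (centered M A 0 1 w) ^ (q1 + q2) \<partial>M)
           - (\<integral>w. (centered M A 0 1 w) ^ q1 \<partial>M) * (\<integral>w. (centered M A 0 1 w) ^ q2 \<partial>M))"
proof -
  have sample: "null_sample M X n p"
    using assms(1-7) unfolding null_sample_def null_sample_axioms_def by blast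
  then interpret null_sample M X n p .
  obtain G where G: "perm_invariant n G" "\<And>s t w. A s t w = G (col_rank s w) (col_rank t w)"
    using rank_stat_representation[OF assms(8)] unfolding col_rank_def by blast
  have "rank_correlation M X n p G A"
    by (rule rank_correlation.intro[OF sample], rule rank_correlation_axioms.intro) (use G assms(3) in auto)
  then interpret rank_correlation M X n p G A .
  show ?thesis
    unfolding integral_S_stat diff_zero power2_eq_square integral_mult_S_stat integral_centered_power v_q_eq
    by simp
qed

end
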